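(* Let $p>1$, $q=\frac{p}{p-1}$ and $0<a<b$. Then $$\left|\frac{I(a,b)}{G(a,b)}\right|\le \exp\!\left(\frac{b-a}{2}\,\bigl(H(|a|^q,|b|^q)\bigr)^{-1/q}\right).$$
   Context: For positive $x,y$: the geometric mean is $G(x,y)=\sqrt{xy}$; the harmonic mean is $H(x,y)=\frac{2xy}{x+y}$; the identric mean is $I(x,y)=x$ if $x=y$ and $I(x,y)=\frac1e\left(\frac{y^y}{x^x}\right)^{\frac{1}{y-x}}$ if $x\ne y$. *)

theory Defs
  imports Complex_Main
begin

definition geom_mean :: "real \<Rightarrow> real \<Rightarrow> real" where
  "geom_mean x y = sqrt (x * y)"

definition harm_mean :: "real \<Rightarrow> real \<Rightarrow> real" where
  "harm_mean x y = 2 * x * y / (x + y)"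

definition identric_mean :: "real \<Rightarrow> real \<Rightarrow> real" where
  "identric_mean x y = (if x = y then x
     else (1 / exp 1) * ((y powr y) / (x powr x)) powr (1 / (y - x)))"

end

theory Submission
  imports Defs
begin

text \<open>
  Taking logarithms, \<open>ln (I/G) = (ln b - ln a)(a + b) / (2(b - a)) - 1\<close>. The logarithmic mean
  dominates the geometric mean, i.e. \<open>ln b - ln a \<le> (b - a) / \<surd>(ab)\<close>, so
  \<open>ln (I/G) \<le> (a + b) / (2\<surd>(ab)) - 1 \<le> (b - a) / (4a)\<close>. Finally a harmonic mean is at most
  twice its smaller argument, whence \<open>H(a^q, b^q)^(1/q) \<le> 2^(1/q) a \<le> 2a\<close> for \<open>q \<ge> 1\<close>.
\<close>

lemma two_ln_le_sub_inverse:
  fixes s :: real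
  assumes "s \<ge> 1"
  shows "2 * ln s \<le> s - 1 / s"
proof -
  let ?f = "\<lambda>x::real. x - 1 / x - 2 * ln x"
  have "?f 1 \<le> ?f s"
  proof (rule DERIV_nonneg_imp_increasing_open[OF assms])
    fix x :: real
    assume x: "1 < x" "x < s"
    have "DERIV ?f x :> 1 + 1 / x\<^sup>2 - 2 / x"
      using x by (auto intro!: derivative_eq_intros simp: power2_eq_square field_simps)
    moreover have "1 + 1 / x\<^sup>2 - 2 / x = (1 - 1 / x)\<^sup>2"
      using x by (simp add: power2_eq_square field_simps)
    ultimately show "\<exists>y. DERIV ?f x :> y \<and> y \<ge> 0"
      by auto
  qed (intro continuous_intros, auto)
  then show ?thesis
    by simp
qed

lemma ln_diff_le_diff_div_geom_mean:
  fixes a b :: real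
  assumes "0 < a" "a \<le> b"
  shows "ln b - ln a \<le> (b - a) / geom_mean a b"
proof -
  define s where "s = sqrt (b / a)"
  have s: "s \<ge> 1" "s\<^sup>2 = b / a"
    using assms by (simp_all add: s_def)
  have "ln b - ln a = ln (s\<^sup>2)"
    using assms s by (simp add: ln_div)
  also have "\<dots> = 2 * ln s"
    using s(1) by (simp add: ln_realpow)
  also have "\<dots> \<le> s - 1 / s"
    using s(1) by (rule two_ln_le_sub_inverse)
  also have "\<dots> = (b - a) / geom_mean a b"
  proof -
    have "geom_mean a b = a * s"
      using assms by (simp add: geom_mean_def s_def real_sqrt_divide real_sqrt_mult
          field_simps real_sqrt_mult_self)
    then show ?thesis
      using assms s by (simp add: field_simps power2_eq_square)
  qed
  finally show ?thesis .
qed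

lemma identric_mean_eq_exp:
  fixes a b :: real
  assumes "0 < a" "0 < b" "a \<noteq> b"
  shows "identric_mean a b = exp ((b * ln b - a * ln a) / (b - a) - 1)"
proof -
  have "ln (b powr b / a powr a) = b * ln b - a * ln a"
    using assms by (simp add: ln_div ln_powr)
  then have "(b powr b / a powr a) powr (1 / (b - a)) = exp ((b * ln b - a * ln a) / (b - a))"
    using assms by (simp add: powr_def)
  then show ?thesis
    using assms by (simp add: identric_mean_def exp_diff)
qed

lemma geom_mean_eq_exp:
  fixes a b :: real
  assumes "0 < a" "0 < b"
  shows "geom_mean a b = exp ((ln a + ln b) / 2)"
  using assms by (simp add: geom_mean_def powr_half_sqrt[symmetric] powr_def ln_mult)

lemma ln_identric_div_geom_mean:
  fixes a b :: real
  assumes "0 < a" "0 < b" "a \<noteq> b"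
  shows "ln (identric_mean a b / geom_mean a b) = (ln b - ln a) * (a + b) / (2 * (b - a)) - 1"
  using assms by (simp add: identric_mean_eq_exp geom_mean_eq_exp exp_diff[symmetric]
      field_simps)

lemma arith_div_geom_mean_sub_one_le:
  fixes a b :: real
  assumes "0 < a" "a \<le> b"
  shows "(a + b) / (2 * geom_mean a b) - 1 \<le> (b - a) / (4 * a)"
proof -
  define x y where "x = sqrt a" and "y = sqrt b"
  have xy: "0 < x" "x \<le> y"
    using assms by (simp_all add: x_def y_def)
  have ab: "a = x\<^sup>2" "b = y\<^sup>2" "geom_mean a b = x * y"
    using assms by (simp_all add: x_def y_def geom_mean_def real_sqrt_mult)
  have "0 \<le> y\<^sup>2 - x * y + 2 * x\<^sup>2"
    using xy by (simp add: power2_eq_square)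
  then have "0 \<le> (y - x) * (y\<^sup>2 - x * y + 2 * x\<^sup>2) / (4 * x\<^sup>2 * y)"
    using xy by simp
  also have "\<dots> = (b - a) / (4 * a) - ((a + b) / (2 * geom_mean a b) - 1)"
    using xy unfolding ab(3) unfolding ab(1,2)
    by (simp add: field_simps power2_eq_square power3_eq_cube)
  finally show ?thesis
    by simp
qed

lemma identric_div_geom_mean_pos:
  fixes a b :: real
  assumes "0 < a" "0 < b" "a \<noteq> b"
  shows "0 < identric_mean a b / geom_mean a b"
  using assms by (simp add: identric_mean_eq_exp geom_mean_eq_exp)

lemma identric_div_geom_mean_le_exp:
  fixes a b :: real
  assumes "0 < a" "a < b"
  shows "identric_mean a b / geom_mean a b \<le> exp ((b - a) / (4 * a))"
proof -
  have G: "0 < geom_mean a b"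
    using assms by (simp add: geom_mean_def)
  have "ln (identric_mean a b / geom_mean a b) = (ln b - ln a) * (a + b) / (2 * (b - a)) - 1"
    using assms by (simp add: ln_identric_div_geom_mean)
  also have "\<dots> \<le> (b - a) / geom_mean a b * (a + b) / (2 * (b - a)) - 1"
    using assms ln_diff_le_diff_div_geom_mean[of a b]
    by (intro diff_right_mono divide_right_mono mult_right_mono) auto
  also have "\<dots> = (a + b) / (2 * geom_mean a b) - 1"
    using assms G by (simp add: field_simps)
  also have "\<dots> \<le> (b - a) / (4 * a)"
    using assms by (simp add: arith_div_geom_mean_sub_one_le)
  finally have "exp (ln (identric_mean a b / geom_mean a b)) \<le> exp ((b - a) / (4 * a))"
    by (rule exp_mono)
  then show ?thesis
    using assms identric_div_geom_mean_pos[of a b] by simp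
qed

lemma harm_mean_pos:
  fixes x y :: real
  assumes "0 < x" "0 < y"
  shows "0 < harm_mean x y"
  using assms by (simp add: harm_mean_def)

lemma harm_mean_le_two_mul_left:
  fixes x y :: real
  assumes "0 < x" "0 < y"
  shows "harm_mean x y \<le> 2 * x"
  using assms by (simp add: harm_mean_def field_simps)

lemma harm_mean_powr_le:
  fixes a b q :: real
  assumes "0 < a" "0 < b" "q \<ge> 1"
  shows "harm_mean (a powr q) (b powr q) powr (1 / q) \<le> 2 * a"
proof -
  have "0 < harm_mean (a powr q) (b powr q)"
    using assms by (simp add: harm_mean_pos)
  then have "harm_mean (a powr q) (b powr q) powr (1 / q) \<le> (2 * a powr q) powr (1 / q)"
    using assms by (intro powr_mono2 harm_mean_le_two_mul_left) auto
  also have "\<dots> = 2 powr (1 / q) * a"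
    using assms by (simp add: powr_mult powr_powr)
  also have "\<dots> \<le> 2 * a"
    using assms powr_mono[of "1 / q" 1 2] by simp
  finally show ?thesis .
qed

theorem proposition2:
  fixes p q a b :: real
  assumes "p > 1" and "q = p / (p - 1)" and "0 < a" and "a < b"
  shows "\<bar>identric_mean a b / geom_mean a b\<bar>
           \<le> exp ((b - a) / 2 * (harm_mean (\<bar>a\<bar> powr q) (\<bar>b\<bar> powr q)) powr (- 1 / q))"
proof -
  define H where "H = harm_mean (a powr q) (b powr q)"
  have q: "q \<ge> 1"
    using assms(1,2) by (simp add: le_divide_eq_1)
  have H: "0 < H" "H powr (1 / q) \<le> 2 * a"
    using assms q harm_mean_powr_le[of a b q] by (simp_all add: H_def harm_mean_pos)
  have "(b - a) / (4 * a) = (b - a) / 2 * (1 / (2 * a))"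
    by simp
  also have "\<dots> \<le> (b - a) / 2 * (1 / H powr (1 / q))"
    using assms H by (intro mult_left_mono frac_le) auto
  also have "\<dots> = (b - a) / 2 * H powr (- 1 / q)"
    using H by (simp add: powr_minus_divide)
  finally have exponent_le: "(b - a) / (4 * a) \<le> (b - a) / 2 * H powr (- 1 / q)" .
  have "\<bar>identric_mean a b / geom_mean a b\<bar> = identric_mean a b / geom_mean a b"
    using assms identric_div_geom_mean_pos[of a b] by (intro abs_of_pos) auto
  also have "\<dots> \<le> exp ((b - a) / (4 * a))"
    using assms(3,4) by (rule identric_div_geom_mean_le_exp)
  also have "\<dots> \<le> exp ((b - a) / 2 * H powr (- 1 / q))"
    using exponent_le by (rule exp_mono)
  finally show ?thesis
    using assms by (simp add: H_def)
qed

end
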